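(* Let $\lambda \geq 1$, $\mu \geq 0$, $\delta \geq 0$, $t\in\left(\tfrac12,1\right)$ and $\xi=\frac{2\lambda+\mu}{2\lambda+1}$. Let $f(z)=z+\sum_{n=2}^{\infty}a_n z^n$ belong to the class $\mathscr{B}_{\Sigma}^{\mu}(\lambda,\delta,t)$ defined below. Then \[ |a_{3}-a_{2}^{2}|\leq \frac{2t}{2\lambda +\mu+6\xi\delta}. \]
   Context: Let $\mathbb{U}=\{z\in\mathbb{C}:|z|<1\}$ and let $\mathcal{A}$ be the class of analytic functions $f$ on $\mathbb{U}$ with $f(0)=0$, $f'(0)=1$, i.e. $f(z)=z+\sum_{n\ge2}a_nz^n$. A function $f\in\mathcal{A}$ is bi-univalent if $f$ is univalent on $\mathbb{U}$ and its inverse $g=f^{-1}$ (defined near $0$, with $f^{-1}(f(z))=z$, and $g(w)=w-a_2w^2+(2a_2^2-a_3)w^3-\cdots$) extends to a univalent function on $\mathbb{U}$; $\Sigma$ denotes the class of such $f$. For analytic $F,G$ on $\mathbb{U}$, $F\prec G$ (subordination) means there is an analytic $\omega$ on $\mathbb{U}$ with $\omega(0)=0$, $|\omega(z)|<1$ and $F=G\circ\omega$. The Chebyshev polynomials of the second kind are $U_0(t)=1$, $U_1(t)=2t$, $U_{n+1}(t)=2tU_n(t)-U_{n-1}(t)$, with generating function $H(z,t)=\frac{1}{1-2tz+z^2}=\sum_{n\ge0}U_n(t)z^n$. For $\lambda\ge1,\mu\ge0,\delta\ge0$, $t\in(\frac12,1)$ and $\xi=\frac{2\lambda+\mu}{2\lambda+1}$,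 the class $\mathscr{B}_{\Sigma}^{\mu}(\lambda,\delta,t)$ consists of all $f\in\Sigma$ such that, with $g=f^{-1}$, \[ (1-\lambda)\left(\tfrac{f(z)}{z}\right)^{\mu}+\lambda f'(z)\left(\tfrac{f(z)}{z}\right)^{\mu-1}+\xi\delta z f''(z)\prec H(z,t) \] and \[ (1-\lambda)\left(\tfrac{g(w)}{w}\right)^{\mu}+\lambda g'(w)\left(\tfrac{g(w)}{w}\right)^{\mu-1}+\xi\delta w g''(w)\prec H(w,t), \] where powers are taken with the principal branch equal to $1$ at the origin. *)

theory Defs
  imports "HOL-Complex_Analysis.Complex_Analysis"
begin

definition subordinate :: "(complex \<Rightarrow> complex) \<Rightarrow> (complex \<Rightarrow> complex) \<Rightarrow> bool" where
  "subordinate F G \<longleftrightarrow>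
     (\<exists>\<omega>. \<omega> holomorphic_on ball 0 1 \<and> \<omega> 0 = 0 \<and>
          (\<forall>z\<in>ball 0 1. norm (\<omega> z) < 1 \<and> F z = G (\<omega> z)))"

text \<open>Generating function of Chebyshev polynomials of the second kind.\<close>
definition chebH :: "complex \<Rightarrow> real \<Rightarrow> complex" where
  "chebH z t = 1 / (1 - 2 * of_real t * z + z ^ 2)"

definition classA :: "(complex \<Rightarrow> complex) \<Rightarrow> bool" where
  "classA f \<longleftrightarrow> f holomorphic_on ball 0 1 \<and> f 0 = 0 \<and> deriv f 0 = 1"

text \<open>f is bi-univalent and g is the univalent extension of its inverse to the unit disc.\<close>
definition bi_univalent_with :: "(complex \<Rightarrow> complex) \<Rightarrow> (complex \<Rightarrow> complex) \<Rightarrow> bool" where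
  "bi_univalent_with f g \<longleftrightarrow>
     classA f \<and> inj_on f (ball 0 1) \<and>
     g holomorphic_on ball 0 1 \<and> inj_on g (ball 0 1) \<and>
     (\<exists>r>0. \<forall>z\<in>ball 0 r. f z \<in> ball 0 1 \<and> g (f z) = z) \<and>
     (\<exists>r>0. \<forall>w\<in>ball 0 r. g w \<in> ball 0 1 \<and> f (g w) = w)"

definition bi_univalent :: "(complex \<Rightarrow> complex) \<Rightarrow> bool" where
  "bi_univalent f \<longleftrightarrow> (\<exists>g. bi_univalent_with f g)"

definition xi :: "real \<Rightarrow> real \<Rightarrow> real" where
  "xi lam mu = (2 * lam + mu) / (2 * lam + 1)"

text \<open>The subordination condition for a function h. Powers (h z / z) powers are taken
  via the analytic branch L of log (h z / z) on the disc with L 0 = 0.\<close>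
definition B_condition :: "real \<Rightarrow> real \<Rightarrow> real \<Rightarrow> real \<Rightarrow> (complex \<Rightarrow> complex) \<Rightarrow> bool" where
  "B_condition lam mu del t h \<longleftrightarrow>
     (\<exists>L. L holomorphic_on ball 0 1 \<and> L 0 = 0 \<and>
          (\<forall>z\<in>ball 0 1 - {0}. exp (L z) = h z / z) \<and>
          subordinate
            (\<lambda>z. (1 - of_real lam) * exp (of_real mu * L z)
                 + of_real lam * deriv h z * exp (of_real (mu - 1) * L z)
                 + of_real (xi lam mu * del) * z * deriv (deriv h) z)
            (\<lambda>z. chebH z t))"

definition classB :: "real \<Rightarrow> real \<Rightarrow> real \<Rightarrow> real \<Rightarrow> (complex \<Rightarrow> complex) \<Rightarrow> bool" where
  "classB mu lam del t f \<longleftrightarrow>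
     (\<exists>g. bi_univalent_with f g \<and> B_condition lam mu del t f \<and> B_condition lam mu del t g)"

definition taylor_coeff :: "(complex \<Rightarrow> complex) \<Rightarrow> nat \<Rightarrow> complex" where
  "taylor_coeff f n = (deriv ^^ n) f 0 / of_nat (fact n)"

end

theory Submission
  imports Defs
begin

(* Let a_n, b_n be the Taylor coefficients of f and of g = f^-1. Inverting the power
   series gives b_2 = -a_2 and b_3 = 2 a_2^2 - a_3. Each subordination is an identity
   F = H(w, t) for a Schwarz function w(z) = c_1 z + c_2 z^2 + ..., and
   H(w, t) = 1 + U_1(t) w + U_2(t) w^2 + ... with U_1(t) = 2t, U_2(t) = 4t^2 - 1.
   Comparing the coefficients of z and z^2 on both sides, for f (with w) and for g
   (with v), gives (mu + lam + 2 xi del) a_2 = 2t c_1 = -2t d_1, so d_1 = -c_1, and the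
   terms in c_1^2 and d_1^2 cancel in the difference of the two z^2 relations:
   (2 lam + mu + 6 xi del) (a_3 - a_2^2) = t (c_2 - d_2). Cauchy's estimate bounds
   |c_2| and |d_2| by 1. *)

lemma taylor_coeff_eq_fps_nth: "taylor_coeff f n = fps_nth (fps_expansion f 0) n"
  by (simp add: taylor_coeff_def fps_expansion_def)

lemma holomorphic_on_ball_has_fps_expansion:
  "f holomorphic_on ball 0 r \<Longrightarrow> 0 < r \<Longrightarrow> f has_fps_expansion fps_expansion f 0"
  by (rule has_fps_expansion_fps_expansion) auto

lemma norm_taylor_coeff_le_1:
  assumes hol: "\<omega> holomorphic_on ball 0 1" and bounded: "\<forall>z\<in>ball 0 1. norm (\<omega> z) < 1"
  shows "norm (taylor_coeff \<omega> n) \<le> 1"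
proof (cases "n = 0")
  case True
  then show ?thesis using bounded by (simp add: taylor_coeff_def less_imp_le)
next
  case False
  have "norm (taylor_coeff \<omega> n) \<le> 1 / r ^ n" if r: "0 < r" "r < 1" for r :: real
  proof -
    have "\<omega> holomorphic_on cball 0 r"
      using r by (intro holomorphic_on_subset[OF hol]) auto
    then have "norm ((deriv ^^ n) \<omega> 0) \<le> fact n * 1 / r ^ n"
      using r False bounded
      by (intro Cauchy_higher_deriv_bound[where y = 0] holomorphic_on_imp_continuous_on) auto
    then show ?thesis
      by (simp add: taylor_coeff_def norm_divide field_simps)
  qed
  then have "\<forall>\<^sub>F r in at_left 1. norm (taylor_coeff \<omega> n) \<le> 1 / r ^ n"
    using eventually_at_left_real[of 0 1] by (auto elim!: eventually_mono)
  moreover have "((\<lambda>r. 1 / r ^ n) \<longlongrightarrow> 1 / 1 ^ n) (at_left (1::real))"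
    by (intro tendsto_intros) auto
  ultimately show ?thesis
    by (simp add: tendsto_lowerbound)
qed

lemma fps_exp_compose_nth:
  fixes L :: "complex fps" and c :: complex
  assumes "fps_nth L 0 = 0"
  shows "fps_nth (fps_exp c oo L) 0 = 1"
    and "fps_nth (fps_exp c oo L) 1 = c * fps_nth L 1"
    and "fps_nth (fps_exp c oo L) 2 = c * fps_nth L 2 + c^2/2 * (fps_nth L 1)^2"
    and "fps_nth (fps_exp c oo L) 3
           = c * fps_nth L 3 + c^2 * fps_nth L 1 * fps_nth L 2 + c^3/6 * (fps_nth L 1)^3"
  using assms
  by (simp_all add: fps_compose_nth fps_mult_nth numeral_3_eq_3 numeral_2_eq_2 power_Suc field_simps)

lemma B_operator_fps_nth:
  fixes L :: "complex fps" and lam mu c :: complex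
  assumes L0: "fps_nth L 0 = 0"
  defines "H \<equiv> fps_X * (fps_exp 1 oo L)"
  defines "F \<equiv> fps_const (1 - lam) * (fps_exp mu oo L)
                + fps_const lam * fps_deriv H * (fps_exp (mu - 1) oo L)
                + fps_const c * fps_X * fps_deriv (fps_deriv H)"
  shows "fps_nth F 1 = (mu + lam + 2 * c) * fps_nth H 2"
    and "fps_nth F 2 = (mu + 2 * lam + 6 * c) * fps_nth H 3
                        + (mu + 2 * lam) * (mu - 1) / 2 * (fps_nth H 2)^2"
proof -
  note E = fps_exp_compose_nth[OF L0, unfolded numeral_3_eq_3 numeral_2_eq_2 One_nat_def]
  have H: "fps_nth H 0 = 0" "fps_nth H (Suc 0) = 1" "fps_nth H (Suc (Suc 0)) = fps_nth L 1"
    "fps_nth H (Suc (Suc (Suc 0))) = fps_nth L 2 + (fps_nth L 1)^2 / 2"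
    using E by (simp_all add: H_def numeral_2_eq_2)
  show "fps_nth F 1 = (mu + lam + 2 * c) * fps_nth H 2"
    by (simp add: F_def fps_mult_nth H E numeral_2_eq_2 algebra_simps)
  show "fps_nth F 2 = (mu + 2 * lam + 6 * c) * fps_nth H 3
                        + (mu + 2 * lam) * (mu - 1) / 2 * (fps_nth H 2)^2"
    by (simp add: F_def fps_mult_nth H E numeral_3_eq_3 numeral_2_eq_2 power2_eq_square)
       (simp add: field_simps)
qed

lemma chebH_compose_fps_nth:
  fixes F W :: "complex fps" and t :: complex
  assumes W0: "fps_nth W 0 = 0" and inv: "F * (1 - fps_const (2 * t) * W + W^2) = 1"
  shows "fps_nth F 1 = 2 * t * fps_nth W 1"
    and "fps_nth F 2 = 2 * t * fps_nth W 2 + (4 * t^2 - 1) * (fps_nth W 1)^2"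
proof -
  define D where "D = 1 - fps_const (2 * t) * W + W^2"
  have D: "fps_nth D 0 = 1" "fps_nth D (Suc 0) = - 2 * t * fps_nth W 1"
    "fps_nth D (Suc (Suc 0)) = - 2 * t * fps_nth W 2 + (fps_nth W 1)^2"
    by (simp_all add: D_def fps_mult_nth W0 numeral_2_eq_2 power2_eq_square)
  have "fps_nth (F * D) n = (if n = 0 then 1 else 0)" for n
    using inv by (simp add: D_def)
  from this[of 0] this[of 1] this[of 2] show
        "fps_nth F 1 = 2 * t * fps_nth W 1"
    and "fps_nth F 2 = 2 * t * fps_nth W 2 + (4 * t^2 - 1) * (fps_nth W 1)^2"
    by (simp_all add: fps_mult_nth numeral_2_eq_2 D) algebra
qed

lemma fps_expansion_eq_X_mult_exp_compose:
  fixes h L :: "complex \<Rightarrow> complex"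
  assumes L: "L holomorphic_on ball 0 1" "L 0 = 0"
    and h0: "h 0 = 0" and exp_L: "\<forall>z\<in>ball 0 1 - {0}. exp (L z) = h z / z"
  shows "fps_expansion h 0 = fps_X * (fps_exp 1 oo fps_expansion L 0)"
proof (rule fps_expansion_eqI)
  have L_fps: "L has_fps_expansion fps_expansion L 0"
    using L(1) by (rule holomorphic_on_ball_has_fps_expansion) simp
  have "fps_nth (fps_expansion L 0) 0 = 0"
    using L(2) by (simp add: fps_expansion_def)
  then have "(\<lambda>z. z * (exp \<circ> L) z) has_fps_expansion fps_X * (fps_exp 1 oo fps_expansion L 0)"
    by (intro has_fps_expansion_mult has_fps_expansion_fps_X
          has_fps_expansion_compose[OF has_fps_expansion_exp1 L_fps])
  moreover have "z * (exp \<circ> L) z = h z" if "z \<in> ball 0 1" for z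
    using exp_L that h0 L(2) by (cases "z = 0") auto
  then have "\<forall>\<^sub>F z in nhds 0. z * (exp \<circ> L) z = h z"
    using eventually_nhds_in_open[of "ball 0 1" 0] by (auto elim!: eventually_mono)
  ultimately show "h has_fps_expansion fps_X * (fps_exp 1 oo fps_expansion L 0)"
    by (rule has_fps_expansion_cong[THEN iffD1, rotated -1]) simp
qed

lemma chebH_denominator_nonzero:
  fixes w :: complex and t :: real
  assumes "norm w < 1" "\<bar>t\<bar> < 1"
  shows "1 - 2 * of_real t * w + w^2 \<noteq> 0"
proof
  assume "1 - 2 * of_real t * w + w^2 = 0"
  then have re: "1 - 2 * t * Re w + (Re w)^2 - (Im w)^2 = 0"
    and im: "Im w * (Re w - t) = 0"
    by (auto simp: complex_eq_iff power2_eq_square algebra_simps)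
  have disc: "(Re w)^2 + (Im w)^2 < 1"
    using assms(1) by (simp add: cmod_def)
  have "t^2 < 1"
    using assms(2) by (simp add: abs_square_less_1)
  from im consider "Im w = 0" | "Re w = t"
    by auto
  then show False
  proof cases
    case 1
    then have "(Re w - t)^2 + (1 - t^2) = 0"
      using re by (simp add: power2_eq_square algebra_simps)
    with \<open>t^2 < 1\<close> show False
      by (smt (verit) zero_le_power2)
  next
    case 2
    then show False
      using re disc by (simp add: power2_eq_square)
  qed
qed

lemma subordinate_chebH_coeffs:
  fixes F :: "complex \<Rightarrow> complex" and t :: real
  assumes F: "F has_fps_expansion Fs" and sub: "subordinate F (\<lambda>z. chebH z t)"
    and t: "\<bar>t\<bar> < 1"
  obtains \<omega> where "\<omega> holomorphic_on ball 0 1" "\<forall>z\<in>ball 0 1. norm (\<omega> z) < 1"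
    "fps_nth Fs 1 = 2 * of_real t * taylor_coeff \<omega> 1"
    "fps_nth Fs 2 = 2 * of_real t * taylor_coeff \<omega> 2 + (4 * (of_real t)^2 - 1) * (taylor_coeff \<omega> 1)^2"
proof -
  obtain \<omega> where hol: "\<omega> holomorphic_on ball 0 1" and "\<omega> 0 = 0"
    and \<omega>: "\<forall>z\<in>ball 0 1. norm (\<omega> z) < 1 \<and> F z = chebH (\<omega> z) t"
    using sub unfolding subordinate_def by blast
  define W where "W = fps_expansion \<omega> 0"
  have W: "\<omega> has_fps_expansion W"
    using hol unfolding W_def by (rule holomorphic_on_ball_has_fps_expansion) simp
  have W0: "fps_nth W 0 = 0"
    using \<open>\<omega> 0 = 0\<close> by (simp add: W_def fps_expansion_def)
  have prod: "(\<lambda>z. F z * (1 - 2 * of_real t * \<omega> z + \<omega> z ^ 2))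
          has_fps_expansion Fs * (1 - fps_const (2 * of_real t) * W + W ^ 2)"
    by (intro has_fps_expansion_mult has_fps_expansion_diff has_fps_expansion_add
          has_fps_expansion_const has_fps_expansion_1 has_fps_expansion_power F W)
  have "F z * (1 - 2 * of_real t * \<omega> z + \<omega> z ^ 2) = 1" if "z \<in> ball 0 1" for z
    using \<omega> that chebH_denominator_nonzero[OF _ t] by (simp add: chebH_def)
  then have ev: "\<forall>\<^sub>F z in nhds 0. 1 = F z * (1 - 2 * of_real t * \<omega> z + \<omega> z ^ 2)"
    using eventually_nhds_in_open[of "ball 0 1" 0] by (auto elim!: eventually_mono)
  have "(\<lambda>z. 1) has_fps_expansion Fs * (1 - fps_const (2 * of_real t) * W + W ^ 2)"
    using has_fps_expansion_cong[THEN iffD2, OF ev refl prod] .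
  then have "Fs * (1 - fps_const (2 * of_real t) * W + W ^ 2) = 1"
    using fps_expansion_unique_complex has_fps_expansion_1 by blast
  with chebH_compose_fps_nth[OF W0] show thesis
    using that hol \<omega> by (simp add: taylor_coeff_eq_fps_nth W_def)
qed

lemma B_condition_coeffs:
  fixes h :: "complex \<Rightarrow> complex"
  assumes B: "B_condition lam mu del t h" and h: "h holomorphic_on ball 0 1" "h 0 = 0"
    and t: "\<bar>t\<bar> < 1"
  obtains \<omega> where "\<omega> holomorphic_on ball 0 1" "\<forall>z\<in>ball 0 1. norm (\<omega> z) < 1"
    "of_real (mu + lam + 2 * xi lam mu * del) * taylor_coeff h 2 = 2 * of_real t * taylor_coeff \<omega> 1"
    "of_real (2 * lam + mu + 6 * xi lam mu * del) * taylor_coeff h 3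
       + of_real ((mu + 2 * lam) * (mu - 1) / 2) * (taylor_coeff h 2)^2
     = 2 * of_real t * taylor_coeff \<omega> 2 + of_real (4 * t^2 - 1) * (taylor_coeff \<omega> 1)^2"
proof -
  obtain L where L: "L holomorphic_on ball 0 1" "L 0 = 0"
    and exp_L: "\<forall>z\<in>ball 0 1 - {0}. exp (L z) = h z / z"
    and sub: "subordinate
                (\<lambda>z. (1 - of_real lam) * exp (of_real mu * L z)
                     + of_real lam * deriv h z * exp (of_real (mu - 1) * L z)
                     + of_real (xi lam mu * del) * z * deriv (deriv h) z)
                (\<lambda>z. chebH z t)"
    using B unfolding B_condition_def by blast
  define Ls where "Ls = fps_expansion L 0"
  define Hs where "Hs = fps_expansion h 0"
  have Ls0: "fps_nth Ls 0 = 0"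
    using L(2) by (simp add: Ls_def fps_expansion_def)
  have Hs: "Hs = fps_X * (fps_exp 1 oo Ls)"
    unfolding Hs_def Ls_def using L h(2) exp_L by (rule fps_expansion_eq_X_mult_exp_compose)
  have H: "h has_fps_expansion Hs"
    using h(1) unfolding Hs_def by (rule holomorphic_on_ball_has_fps_expansion) simp
  have "L has_fps_expansion Ls"
    using L(1) unfolding Ls_def by (rule holomorphic_on_ball_has_fps_expansion) simp
  then have exp_fps: "(\<lambda>z. exp (c * L z)) has_fps_expansion (fps_exp c oo Ls)" for c
    using has_fps_expansion_compose[OF has_fps_expansion_exp _ Ls0] by (simp add: o_def)
  have "(\<lambda>z. (1 - of_real lam) * exp (of_real mu * L z)
              + of_real lam * deriv h z * exp (of_real (mu - 1) * L z)
              + of_real (xi lam mu * del) * z * deriv (deriv h) z)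
        has_fps_expansion
          fps_const (1 - of_real lam) * (fps_exp (of_real mu) oo Ls)
          + fps_const (of_real lam) * fps_deriv Hs * (fps_exp (of_real mu - 1) oo Ls)
          + fps_const (of_real (xi lam mu * del)) * fps_X * fps_deriv (fps_deriv Hs)"
      (is "_ has_fps_expansion ?F")
    using exp_fps[of "of_real (mu - 1)"]
    by (intro has_fps_expansion_add has_fps_expansion_mult has_fps_expansion_const exp_fps
          has_fps_expansion_deriv H has_fps_expansion_fps_X) simp_all
  from subordinate_chebH_coeffs[OF this sub t] obtain \<omega> where
    "\<omega> holomorphic_on ball 0 1" "\<forall>z\<in>ball 0 1. norm (\<omega> z) < 1"
    "fps_nth ?F 1 = 2 * of_real t * taylor_coeff \<omega> 1"
    "fps_nth ?F 2 = 2 * of_real t * taylor_coeff \<omega> 2 + (4 * (of_real t)^2 - 1) * (taylor_coeff \<omega> 1)^2"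
    by blast
  moreover note B_operator_fps_nth[OF Ls0, of "of_real lam" "of_real mu" "of_real (xi lam mu * del)",
    folded Hs]
  ultimately show thesis
    using that by (simp add: taylor_coeff_eq_fps_nth flip: Hs_def)
qed

lemma fps_compose_inverse_nth:
  fixes F G :: "'a :: comm_ring_1 fps"
  assumes GF: "G oo F = fps_X" and F0: "fps_nth F 0 = 0" and F1: "fps_nth F 1 = 1"
  shows "fps_nth G 2 = - fps_nth F 2"
    and "fps_nth G 3 = 2 * (fps_nth F 2)^2 - fps_nth F 3"
proof -
  have "fps_nth (G oo F) 1 = 1" "fps_nth (G oo F) 2 = 0" "fps_nth (G oo F) 3 = 0"
    by (simp_all add: GF)
  then have G1: "fps_nth G 1 = 1" and "fps_nth G 1 * fps_nth F 2 + fps_nth G 2 = 0"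
    and G3: "fps_nth G 1 * fps_nth F 3 + 2 * fps_nth G 2 * fps_nth F 2 + fps_nth G 3 = 0"
    by (simp_all add: fps_compose_nth fps_mult_nth numeral_3_eq_3 numeral_2_eq_2
        F0 F1[unfolded One_nat_def] algebra_simps)
  then show G2: "fps_nth G 2 = - fps_nth F 2"
    by (simp add: eq_neg_iff_add_eq_0 add.commute)
  show "fps_nth G 3 = 2 * (fps_nth F 2)^2 - fps_nth F 3"
    using G3 unfolding G1 G2 by (simp add: power2_eq_square algebra_simps eq_diff_eq)
qed

lemma bi_univalent_with_coeffs:
  assumes "bi_univalent_with f g"
  shows "g 0 = 0"
    and "taylor_coeff g 2 = - taylor_coeff f 2"
    and "taylor_coeff g 3 = 2 * (taylor_coeff f 2)^2 - taylor_coeff f 3"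
proof -
  have f: "f holomorphic_on ball 0 1" "f 0 = 0" "deriv f 0 = 1"
    and g: "g holomorphic_on ball 0 1"
    using assms unfolding bi_univalent_with_def classA_def by auto
  obtain r where "r > 0" and gf: "\<forall>z\<in>ball 0 r. g (f z) = z"
    using assms unfolding bi_univalent_with_def by blast
  then show "g 0 = 0"
    using f(2) by (metis centre_in_ball)
  define F G where "F = fps_expansion f 0" and "G = fps_expansion g 0"
  have F: "f has_fps_expansion F" and G: "g has_fps_expansion G"
    unfolding F_def G_def using f(1) g by (auto intro: holomorphic_on_ball_has_fps_expansion)
  have F0: "fps_nth F 0 = 0" and F1: "fps_nth F 1 = 1"
    using f(2,3) by (simp_all add: F_def fps_expansion_def)
  have "\<forall>\<^sub>F z in nhds 0. z = (g \<circ> f) z"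
    using eventually_nhds_in_open[of "ball 0 r" 0] \<open>r > 0\<close> gf by (auto elim!: eventually_mono)
  from has_fps_expansion_cong[THEN iffD2, OF this refl has_fps_expansion_compose[OF G F F0]]
  have "(\<lambda>z. z) has_fps_expansion (G oo F)" .
  then have "G oo F = fps_X"
    using fps_expansion_unique_complex has_fps_expansion_fps_X by blast
  from fps_compose_inverse_nth[OF this F0 F1]
  show "taylor_coeff g 2 = - taylor_coeff f 2"
    and "taylor_coeff g 3 = 2 * (taylor_coeff f 2)^2 - taylor_coeff f 3"
    by (simp_all add: taylor_coeff_eq_fps_nth F_def G_def)
qed

lemma coeff_difference_bound:
  fixes a2 a3 w1 w2 v1 v2 :: complex and P M K q t :: real
  assumes w2: "norm w2 \<le> 1"
    and f1: "of_real P * a2 = 2 * of_real t * w1"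
    and f2: "of_real M * a3 + of_real K * a2^2 = 2 * of_real t * w2 + of_real q * w1^2"
    and v2: "norm v2 \<le> 1"
    and g1: "of_real P * (- a2) = 2 * of_real t * v1"
    and g2: "of_real M * (2 * a2^2 - a3) + of_real K * (- a2)^2 = 2 * of_real t * v2 + of_real q * v1^2"
    and t: "0 < t" and M: "0 < M"
  shows "norm (a3 - a2^2) \<le> 2 * t / M"
proof -
  have "2 * of_real t * (v1 + w1) = 0"
    using f1 g1 by algebra
  then have "v1 = - w1"
    using t by (simp add: eq_neg_iff_add_eq_0)
  then have "of_real M * (a3 - a2^2) = of_real t * (w2 - v2)"
    using f2 g2 by algebra
  then have "M * norm (a3 - a2^2) = t * norm (w2 - v2)"
    using t M by (metis norm_mult norm_of_real abs_of_pos)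
  also have "\<dots> \<le> t * 2"
    using t w2 v2 norm_triangle_ineq4[of w2 v2] by simp
  finally show ?thesis
    using M by (simp add: field_simps)
qed

theorem mainTheorem3:
  fixes lam mu del t :: real and f :: "complex \<Rightarrow> complex"
  assumes "lam \<ge> 1" and "mu \<ge> 0" and "del \<ge> 0" and "1/2 < t" and "t < 1"
    and "classB mu lam del t f"
  shows "norm (taylor_coeff f 3 - (taylor_coeff f 2)^2) \<le> 2 * t / (2 * lam + mu + 6 * xi lam mu * del)"
proof -
  obtain g where fg: "bi_univalent_with f g"
    and Bf: "B_condition lam mu del t f" and Bg: "B_condition lam mu del t g"
    using assms(6) unfolding classB_def by blast
  have f: "f holomorphic_on ball 0 1" "f 0 = 0" and g: "g holomorphic_on ball 0 1"
    using fg unfolding bi_univalent_with_def classA_def by auto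
  have t: "\<bar>t\<bar> < 1"
    using assms(4,5) by simp
  let ?a2 = "taylor_coeff f 2" and ?a3 = "taylor_coeff f 3"
  let ?P = "mu + lam + 2 * xi lam mu * del" and ?M = "2 * lam + mu + 6 * xi lam mu * del"
    and ?K = "(mu + 2 * lam) * (mu - 1) / 2" and ?q = "4 * t^2 - 1"
  have "xi lam mu \<ge> 0"
    using assms(1,2) by (simp add: xi_def)
  then have M: "?M > 0"
    using assms(1-3) by (smt (verit) mult_nonneg_nonneg)
  note g_coeffs = bi_univalent_with_coeffs[OF fg]
  obtain \<omega> where "norm (taylor_coeff \<omega> 2) \<le> 1"
    and "of_real ?P * ?a2 = 2 * of_real t * taylor_coeff \<omega> 1"
    and "of_real ?M * ?a3 + of_real ?K * ?a2^2
           = 2 * of_real t * taylor_coeff \<omega> 2 + of_real ?q * (taylor_coeff \<omega> 1)^2"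
    using B_condition_coeffs[OF Bf f t] norm_taylor_coeff_le_1 by metis
  moreover obtain \<nu> where "norm (taylor_coeff \<nu> 2) \<le> 1"
    and "of_real ?P * (- ?a2) = 2 * of_real t * taylor_coeff \<nu> 1"
    and "of_real ?M * (2 * ?a2^2 - ?a3) + of_real ?K * (- ?a2)^2
           = 2 * of_real t * taylor_coeff \<nu> 2 + of_real ?q * (taylor_coeff \<nu> 1)^2"
    using B_condition_coeffs[OF Bg g g_coeffs(1) t] norm_taylor_coeff_le_1
    unfolding g_coeffs(2,3) by metis
  ultimately show ?thesis
    by (rule coeff_difference_bound) (use assms(4) M in auto)
qed

end
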